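(* Let $S=(X,\iota(X),\tau(X,X'))$ be an array-based transition system, $\mathcal{P}$ a finite set of index predicates and $\hat S_{\mathcal{P}}$ its indexed predicate abstraction. For any sentences $F(X_{\mathcal{P}})$ and $\psi(X_{\mathcal{P}})$ over $\Sigma_I\cup X_{\mathcal{P}}$, the formula $$AbsRelInd(F,\tau,\psi,\mathcal{P}):=F(X_{\mathcal{P}})\wedge\psi(X_{\mathcal{P}})\wedge H_{\mathcal{P}}(X_{\mathcal{P}},X)\wedge EQ_{\mathcal{P}}(X,\bar X)\wedge\tau(\bar X,\bar X')\wedge EQ_{\mathcal{P}}(\bar X',X')\wedge\neg\psi(X'_{\mathcal{P}})\wedge H_{\mathcal{P}}(X'_{\mathcal{P}},X')$$ (where $\bar X,\bar X'$ are fresh copies of the array symbols) and the formula $F(X_{\mathcal{P}})\wedge\hat\tau(X_{\mathcal{P}},X'_{\mathcal{P}})\wedge\psi(X_{\mathcal{P}})\wedge\neg\psi(X'_{\mathcal{P}})$ are equisatisfiable. Moreover, if a model $\mathcal{M}$ with states $s,s'$ satisfies $AbsRelInd(F,\tau,\psi,\mathcal{P})$, then the abstract states $\hat s_{\mathcal{P}},\hat s'_{\mathcal{P}}$ (over $\mathcal{M}_{|I}$) satisfy $F(X_{\mathcal{P}})\wedge\hat\tau(X_{\mathcal{P}},X'_{\mathcal{P}})\wedge\psi(X_{\mathcal{P}})\wedge\neg\psi(X'_{\mathcal{P}})$.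
   Context: Setting: index theory $\mathcal{T}_I$ (signature $\Sigma_I$, all models with finite universes), element theory $\mathcal{T}_E$, and the combined theory $A^E_I$ in which array-sort symbols denote total functions from the index universe to the element universe and $x[i]$ is application. An array-based transition system $S=(X,\iota(X),\tau(X,X'))$ has a finite set $X$ of array symbols and formulas $\iota,\tau$ quantifying only over the index sort. Fix index variables $I$ and a finite set $\mathcal{P}(I)$ of atoms $p(I,X)$; for each $p$ a fresh index-sort predicate symbol $x_p$ (arity = number of free index variables of $p$), forming $X_{\mathcal{P}}$. Define $H_{\mathcal{P}}(X_{\mathcal{P}},X):=\forall I.\bigwedge_{p\in\mathcal{P}}(x_p(I)\leftrightarrow p(I,X))$ and $EQ_{\mathcal{P}}(X,X'):=\forall I.\bigwedge_{p\in\mathcal{P}}(p(I,X)\leftrightarrow p(I,X'))$. The abstract transition is $\hat\tau(X_{\mathcal{P}},X'_{\mathcal{P}}):=\exists X,X'.(\tau(X,X')\wedge H_{\mathcal{P}}(X_{\mathcal{P}},X)\wedge H_{\mathcal{P}}(X'_{\mathcal{P}},X'))$ (existence of array valuations in a model of $A^E_I$ with the given index part). For a model $\mathcal{M}$ of $A^E_I$ with index restriction $\mathcal{M}_{|I}$ and a valuation $s$ of $X$, $\hat s_{\mathcal{P}}$ is the interpretation of $X_{\mathcal{P}}$ over $\mathcal{M}_{|I}$ given by $\hat s_{\mathcal{P}}(x_p)=\{\underline m\mid \mathcal{M},s\models p(\underline m,X)\}$. *)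

theory Defs
  imports "HOL-Library.FuncSet"
begin

(* Semantic rendering.
   'n  : index structures (models of T_I), universe given by iU
   'el : element structures (models of T_E), universe given by eU
   a model of A^E_I is a pair (N,E) with N \<in> TI, E \<in> TE
   'x  : array symbols; a state is s :: 'x \<Rightarrow> 'i \<Rightarrow> 'e, total functions
         from the index universe to the element universe (extensional)
   'p  : index atoms p(I,X), with arity ar p (number of free index vars);
         atom p M s ms  is  M,s |= p(ms,X)
   interpretation of X_P over N : Xp :: 'p \<Rightarrow> 'i list set *)

definition tuples :: "'i set \<Rightarrow> nat \<Rightarrow> 'i list set" where
  "tuples U k = {ms. length ms = k \<and> set ms \<subseteq> U}"

definition arr_val ::
  "('n \<Rightarrow> 'i set) \<Rightarrow> ('el \<Rightarrow> 'e set) \<Rightarrow> 'x set \<Rightarrow> 'n \<Rightarrow> 'el \<Rightarrow> ('x \<Rightarrow> 'i \<Rightarrow> 'e) \<Rightarrow> bool" where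
  "arr_val iU eU X N E s \<longleftrightarrow> s \<in> X \<rightarrow>\<^sub>E (iU N \<rightarrow>\<^sub>E eU E)"

definition xp_interp ::
  "('n \<Rightarrow> 'i set) \<Rightarrow> 'p set \<Rightarrow> ('p \<Rightarrow> nat) \<Rightarrow> 'n \<Rightarrow> ('p \<Rightarrow> 'i list set) \<Rightarrow> bool" where
  "xp_interp iU P ar N Xp \<longleftrightarrow> (\<forall>p. Xp p \<subseteq> (if p \<in> P then tuples (iU N) (ar p) else {}))"

definition H_P ::
  "('n \<Rightarrow> 'i set) \<Rightarrow> 'p set \<Rightarrow> ('p \<Rightarrow> nat) \<Rightarrow>
   ('p \<Rightarrow> 'n \<times> 'el \<Rightarrow> ('x \<Rightarrow> 'i \<Rightarrow> 'e) \<Rightarrow> 'i list \<Rightarrow> bool) \<Rightarrow>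
   'n \<Rightarrow> 'el \<Rightarrow> ('p \<Rightarrow> 'i list set) \<Rightarrow> ('x \<Rightarrow> 'i \<Rightarrow> 'e) \<Rightarrow> bool" where
  "H_P iU P ar atom N E Xp s \<longleftrightarrow>
     (\<forall>p\<in>P. \<forall>ms\<in>tuples (iU N) (ar p). ms \<in> Xp p \<longleftrightarrow> atom p (N, E) s ms)"

definition EQ_P ::
  "('n \<Rightarrow> 'i set) \<Rightarrow> 'p set \<Rightarrow> ('p \<Rightarrow> nat) \<Rightarrow>
   ('p \<Rightarrow> 'n \<times> 'el \<Rightarrow> ('x \<Rightarrow> 'i \<Rightarrow> 'e) \<Rightarrow> 'i list \<Rightarrow> bool) \<Rightarrow>
   'n \<Rightarrow> 'el \<Rightarrow> ('x \<Rightarrow> 'i \<Rightarrow> 'e) \<Rightarrow> ('x \<Rightarrow> 'i \<Rightarrow> 'e) \<Rightarrow> bool" where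
  "EQ_P iU P ar atom N E s t \<longleftrightarrow>
     (\<forall>p\<in>P. \<forall>ms\<in>tuples (iU N) (ar p). atom p (N, E) s ms \<longleftrightarrow> atom p (N, E) t ms)"

definition abs_tau ::
  "('n \<Rightarrow> 'i set) \<Rightarrow> ('el \<Rightarrow> 'e set) \<Rightarrow> 'el set \<Rightarrow> 'x set \<Rightarrow> 'p set \<Rightarrow> ('p \<Rightarrow> nat) \<Rightarrow>
   ('p \<Rightarrow> 'n \<times> 'el \<Rightarrow> ('x \<Rightarrow> 'i \<Rightarrow> 'e) \<Rightarrow> 'i list \<Rightarrow> bool) \<Rightarrow>
   ('n \<times> 'el \<Rightarrow> ('x \<Rightarrow> 'i \<Rightarrow> 'e) \<Rightarrow> ('x \<Rightarrow> 'i \<Rightarrow> 'e) \<Rightarrow> bool) \<Rightarrow>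
   'n \<Rightarrow> ('p \<Rightarrow> 'i list set) \<Rightarrow> ('p \<Rightarrow> 'i list set) \<Rightarrow> bool" where
  "abs_tau iU eU TE X P ar atom \<tau> N Xp Xp' \<longleftrightarrow>
     (\<exists>E\<in>TE. \<exists>s s'. arr_val iU eU X N E s \<and> arr_val iU eU X N E s' \<and>
        \<tau> (N, E) s s' \<and> H_P iU P ar atom N E Xp s \<and> H_P iU P ar atom N E Xp' s')"

definition abs_state ::
  "('n \<Rightarrow> 'i set) \<Rightarrow> 'p set \<Rightarrow> ('p \<Rightarrow> nat) \<Rightarrow>
   ('p \<Rightarrow> 'n \<times> 'el \<Rightarrow> ('x \<Rightarrow> 'i \<Rightarrow> 'e) \<Rightarrow> 'i list \<Rightarrow> bool) \<Rightarrow>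
   'n \<Rightarrow> 'el \<Rightarrow> ('x \<Rightarrow> 'i \<Rightarrow> 'e) \<Rightarrow> 'p \<Rightarrow> 'i list set" where
  "abs_state iU P ar atom N E s =
     (\<lambda>p. if p \<in> P then {ms \<in> tuples (iU N) (ar p). atom p (N, E) s ms} else {})"

definition AbsRelInd ::
  "('n \<Rightarrow> ('p \<Rightarrow> 'i list set) \<Rightarrow> bool) \<Rightarrow>
   ('n \<times> 'el \<Rightarrow> ('x \<Rightarrow> 'i \<Rightarrow> 'e) \<Rightarrow> ('x \<Rightarrow> 'i \<Rightarrow> 'e) \<Rightarrow> bool) \<Rightarrow>
   ('n \<Rightarrow> ('p \<Rightarrow> 'i list set) \<Rightarrow> bool) \<Rightarrow>
   ('n \<Rightarrow> 'i set) \<Rightarrow> 'p set \<Rightarrow> ('p \<Rightarrow> nat) \<Rightarrow>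
   ('p \<Rightarrow> 'n \<times> 'el \<Rightarrow> ('x \<Rightarrow> 'i \<Rightarrow> 'e) \<Rightarrow> 'i list \<Rightarrow> bool) \<Rightarrow>
   'n \<Rightarrow> 'el \<Rightarrow> ('p \<Rightarrow> 'i list set) \<Rightarrow> ('p \<Rightarrow> 'i list set) \<Rightarrow>
   ('x \<Rightarrow> 'i \<Rightarrow> 'e) \<Rightarrow> ('x \<Rightarrow> 'i \<Rightarrow> 'e) \<Rightarrow> ('x \<Rightarrow> 'i \<Rightarrow> 'e) \<Rightarrow> ('x \<Rightarrow> 'i \<Rightarrow> 'e) \<Rightarrow> bool" where
  "AbsRelInd F \<tau> \<psi> iU P ar atom N E Xp Xp' s sb sb' s' \<longleftrightarrow>
     F N Xp \<and> \<psi> N Xp \<and> H_P iU P ar atom N E Xp s \<and> EQ_P iU P ar atom N E s sb \<and>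
     \<tau> (N, E) sb sb' \<and> EQ_P iU P ar atom N E sb' s' \<and> \<not> \<psi> N Xp' \<and>
     H_P iU P ar atom N E Xp' s'"

definition AbsRelInd_sat ::
  "('n \<Rightarrow> ('p \<Rightarrow> 'i list set) \<Rightarrow> bool) \<Rightarrow>
   ('n \<times> 'el \<Rightarrow> ('x \<Rightarrow> 'i \<Rightarrow> 'e) \<Rightarrow> ('x \<Rightarrow> 'i \<Rightarrow> 'e) \<Rightarrow> bool) \<Rightarrow>
   ('n \<Rightarrow> ('p \<Rightarrow> 'i list set) \<Rightarrow> bool) \<Rightarrow>
   'n set \<Rightarrow> 'el set \<Rightarrow> ('n \<Rightarrow> 'i set) \<Rightarrow> ('el \<Rightarrow> 'e set) \<Rightarrow> 'x set \<Rightarrow> 'p set \<Rightarrow> ('p \<Rightarrow> nat) \<Rightarrow>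
   ('p \<Rightarrow> 'n \<times> 'el \<Rightarrow> ('x \<Rightarrow> 'i \<Rightarrow> 'e) \<Rightarrow> 'i list \<Rightarrow> bool) \<Rightarrow> bool" where
  "AbsRelInd_sat F \<tau> \<psi> TI TE iU eU X P ar atom \<longleftrightarrow>
     (\<exists>N\<in>TI. \<exists>E\<in>TE. \<exists>Xp Xp' s sb sb' s'.
        xp_interp iU P ar N Xp \<and> xp_interp iU P ar N Xp' \<and>
        arr_val iU eU X N E s \<and> arr_val iU eU X N E sb \<and>
        arr_val iU eU X N E sb' \<and> arr_val iU eU X N E s' \<and>
        AbsRelInd F \<tau> \<psi> iU P ar atom N E Xp Xp' s sb sb' s')"

definition abs_formula ::
  "('n \<Rightarrow> ('p \<Rightarrow> 'i list set) \<Rightarrow> bool) \<Rightarrow>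
   ('n \<times> 'el \<Rightarrow> ('x \<Rightarrow> 'i \<Rightarrow> 'e) \<Rightarrow> ('x \<Rightarrow> 'i \<Rightarrow> 'e) \<Rightarrow> bool) \<Rightarrow>
   ('n \<Rightarrow> ('p \<Rightarrow> 'i list set) \<Rightarrow> bool) \<Rightarrow>
   'el set \<Rightarrow> ('n \<Rightarrow> 'i set) \<Rightarrow> ('el \<Rightarrow> 'e set) \<Rightarrow> 'x set \<Rightarrow> 'p set \<Rightarrow> ('p \<Rightarrow> nat) \<Rightarrow>
   ('p \<Rightarrow> 'n \<times> 'el \<Rightarrow> ('x \<Rightarrow> 'i \<Rightarrow> 'e) \<Rightarrow> 'i list \<Rightarrow> bool) \<Rightarrow>
   'n \<Rightarrow> ('p \<Rightarrow> 'i list set) \<Rightarrow> ('p \<Rightarrow> 'i list set) \<Rightarrow> bool" where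
  "abs_formula F \<tau> \<psi> TE iU eU X P ar atom N Xp Xp' \<longleftrightarrow>
     F N Xp \<and> abs_tau iU eU TE X P ar atom \<tau> N Xp Xp' \<and> \<psi> N Xp \<and> \<not> \<psi> N Xp'"

definition abs_sat ::
  "('n \<Rightarrow> ('p \<Rightarrow> 'i list set) \<Rightarrow> bool) \<Rightarrow>
   ('n \<times> 'el \<Rightarrow> ('x \<Rightarrow> 'i \<Rightarrow> 'e) \<Rightarrow> ('x \<Rightarrow> 'i \<Rightarrow> 'e) \<Rightarrow> bool) \<Rightarrow>
   ('n \<Rightarrow> ('p \<Rightarrow> 'i list set) \<Rightarrow> bool) \<Rightarrow>
   'n set \<Rightarrow> 'el set \<Rightarrow> ('n \<Rightarrow> 'i set) \<Rightarrow> ('el \<Rightarrow> 'e set) \<Rightarrow> 'x set \<Rightarrow> 'p set \<Rightarrow> ('p \<Rightarrow> nat) \<Rightarrow>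
   ('p \<Rightarrow> 'n \<times> 'el \<Rightarrow> ('x \<Rightarrow> 'i \<Rightarrow> 'e) \<Rightarrow> 'i list \<Rightarrow> bool) \<Rightarrow> bool" where
  "abs_sat F \<tau> \<psi> TI TE iU eU X P ar atom \<longleftrightarrow>
     (\<exists>N\<in>TI. \<exists>Xp Xp'. xp_interp iU P ar N Xp \<and> xp_interp iU P ar N Xp' \<and>
        abs_formula F \<tau> \<psi> TE iU eU X P ar atom N Xp Xp')"

end

theory Submission
  imports Defs
begin

text \<open>Since \<open>H_P\<close> only constrains a state through the truth values of the atoms in \<open>P\<close>,
  it is invariant under \<open>EQ_P\<close>; so the fresh copies \<open>sb, sb'\<close> in \<open>AbsRelInd\<close> can be merged
  with \<open>s, s'\<close> and vice versa, which turns a model of \<open>AbsRelInd\<close> into a witness for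
  the abstract transition and back. Moreover, \<open>H_P\<close> together with \<open>xp_interp\<close> pins \<open>X_P\<close> down
  to the abstract state of the concrete state.\<close>

lemma EQ_P_refl: "EQ_P iU P ar atom N E s s"
  unfolding EQ_P_def by blast

lemma H_P_EQ_P_trans:
  assumes "H_P iU P ar atom N E Xp s" "EQ_P iU P ar atom N E s t"
  shows "H_P iU P ar atom N E Xp t"
  using assms unfolding H_P_def EQ_P_def by blast

lemma H_P_EQ_P_trans_sym:
  assumes "H_P iU P ar atom N E Xp s" "EQ_P iU P ar atom N E t s"
  shows "H_P iU P ar atom N E Xp t"
  using assms unfolding H_P_def EQ_P_def by blast

lemma xp_interp_H_P_imp_abs_state:
  assumes "xp_interp iU P ar N Xp" "H_P iU P ar atom N E Xp s"
  shows "Xp = abs_state iU P ar atom N E s"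
proof
  fix p
  show "Xp p = abs_state iU P ar atom N E s p"
    using assms unfolding xp_interp_def H_P_def abs_state_def
    by (cases "p \<in> P"; fastforce)
qed

lemma AbsRelInd_imp_abs_formula:
  assumes "E \<in> TE" "arr_val iU eU X N E sb" "arr_val iU eU X N E sb'"
    and "AbsRelInd F \<tau> \<psi> iU P ar atom N E Xp Xp' s sb sb' s'"
  shows "abs_formula F \<tau> \<psi> TE iU eU X P ar atom N Xp Xp'"
proof -
  from assms(4) have "H_P iU P ar atom N E Xp sb" "H_P iU P ar atom N E Xp' sb'"
    unfolding AbsRelInd_def by (auto intro: H_P_EQ_P_trans H_P_EQ_P_trans_sym)
  with assms show ?thesis
    unfolding abs_formula_def abs_tau_def AbsRelInd_def by blast
qed

lemma abs_formula_imp_AbsRelInd: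
  assumes "abs_formula F \<tau> \<psi> TE iU eU X P ar atom N Xp Xp'"
  obtains E s s' where "E \<in> TE" "arr_val iU eU X N E s" "arr_val iU eU X N E s'"
    and "AbsRelInd F \<tau> \<psi> iU P ar atom N E Xp Xp' s s s' s'"
  using assms EQ_P_refl unfolding abs_formula_def abs_tau_def AbsRelInd_def by metis

lemma AbsRelInd_sat_iff_abs_sat:
  "AbsRelInd_sat F \<tau> \<psi> TI TE iU eU X P ar atom \<longleftrightarrow> abs_sat F \<tau> \<psi> TI TE iU eU X P ar atom"
proof
  assume "AbsRelInd_sat F \<tau> \<psi> TI TE iU eU X P ar atom"
  then show "abs_sat F \<tau> \<psi> TI TE iU eU X P ar atom"
    unfolding AbsRelInd_sat_def abs_sat_def by (meson AbsRelInd_imp_abs_formula)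
next
  assume "abs_sat F \<tau> \<psi> TI TE iU eU X P ar atom"
  then obtain N Xp Xp' where "N \<in> TI" "xp_interp iU P ar N Xp" "xp_interp iU P ar N Xp'"
    and "abs_formula F \<tau> \<psi> TE iU eU X P ar atom N Xp Xp'"
    unfolding abs_sat_def by blast
  then show "AbsRelInd_sat F \<tau> \<psi> TI TE iU eU X P ar atom"
    unfolding AbsRelInd_sat_def by (elim abs_formula_imp_AbsRelInd) blast
qed

theorem mainTheorem2:
  fixes TI :: "'n set" and TE :: "'el set"
    and iU :: "'n \<Rightarrow> 'i set" and eU :: "'el \<Rightarrow> 'e set"
    and X :: "'x set" and P :: "'p set" and ar :: "'p \<Rightarrow> nat"
    and atom :: "'p \<Rightarrow> 'n \<times> 'el \<Rightarrow> ('x \<Rightarrow> 'i \<Rightarrow> 'e) \<Rightarrow> 'i list \<Rightarrow> bool"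
    and \<tau> :: "'n \<times> 'el \<Rightarrow> ('x \<Rightarrow> 'i \<Rightarrow> 'e) \<Rightarrow> ('x \<Rightarrow> 'i \<Rightarrow> 'e) \<Rightarrow> bool"
    and F \<psi> :: "'n \<Rightarrow> ('p \<Rightarrow> 'i list set) \<Rightarrow> bool"
  assumes "\<forall>N\<in>TI. finite (iU N)"
    and "finite X"
    and "finite P"
  shows "(AbsRelInd_sat F \<tau> \<psi> TI TE iU eU X P ar atom \<longleftrightarrow> abs_sat F \<tau> \<psi> TI TE iU eU X P ar atom)
    \<and> (\<forall>N\<in>TI. \<forall>E\<in>TE. \<forall>Xp Xp' s sb sb' s'.
          xp_interp iU P ar N Xp \<and> xp_interp iU P ar N Xp' \<and>
          arr_val iU eU X N E s \<and> arr_val iU eU X N E sb \<and>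
          arr_val iU eU X N E sb' \<and> arr_val iU eU X N E s' \<and>
          AbsRelInd F \<tau> \<psi> iU P ar atom N E Xp Xp' s sb sb' s'
          \<longrightarrow> abs_formula F \<tau> \<psi> TE iU eU X P ar atom N
                (abs_state iU P ar atom N E s) (abs_state iU P ar atom N E s'))"
proof (intro conjI ballI allI impI AbsRelInd_sat_iff_abs_sat)
  fix N E Xp Xp' s sb sb' s'
  assume "E \<in> TE" and models: "xp_interp iU P ar N Xp \<and> xp_interp iU P ar N Xp' \<and>
          arr_val iU eU X N E s \<and> arr_val iU eU X N E sb \<and>
          arr_val iU eU X N E sb' \<and> arr_val iU eU X N E s' \<and>
          AbsRelInd F \<tau> \<psi> iU P ar atom N E Xp Xp' s sb sb' s'"
  then have "Xp = abs_state iU P ar atom N E s" "Xp' = abs_state iU P ar atom N E s'"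
    unfolding AbsRelInd_def by (auto intro: xp_interp_H_P_imp_abs_state)
  moreover have "abs_formula F \<tau> \<psi> TE iU eU X P ar atom N Xp Xp'"
    using \<open>E \<in> TE\<close> models by (blast intro: AbsRelInd_imp_abs_formula)
  ultimately show "abs_formula F \<tau> \<psi> TE iU eU X P ar atom N
      (abs_state iU P ar atom N E s) (abs_state iU P ar atom N E s')"
    by simp
qed

end
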